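(* Let $G$ be a finite digraph such that $\mathrm{Pol}(G)\models\Sigma_M$ and $\mathrm{Pol}(G)\models\Sigma_p$ for every prime $p$. Then every minor condition satisfied by $\mathrm{Pol}(P_2)$ is also satisfied by $\mathrm{Pol}(G)$; i.e. $\Sigma(P_2)\subseteq\Sigma(G)$.
   Context: A digraph is $(V,E)$ with $E\subseteq V^2$. A polymorphism of arity $k$ of $H$ is a homomorphism $H^k\to H$ (where $H^k$ has vertices $V^k$ and edges $((u_i),(v_i))$ with $(u_i,v_i)\in E$ for all $i$); $\mathrm{Pol}(H)$ is the set of polymorphisms. For $f:V^k\to V$ and $\sigma:\{1,\dots,k\}\to\{1,\dots,n\}$, the minor $f_\sigma$ is $(x_1,\dots,x_n)\mapsto f(x_{\sigma(1)},\dots,x_{\sigma(k)})$. A minor condition is a set of formal equations $f_\sigma=g_\tau$ between function symbols (with arities) and maps $\sigma,\tau$; a set of operations $F$ satisfies it ($F\models\Sigma$) if the symbols can be interpreted by operations in $F$ of the right arities so that all equations hold identically. $\Sigma(H)$ is the class of minor conditions satisfied by $\mathrm{Pol}(H)$. $\Sigma_n$ is the condition $f(x_1,\dots,x_n)=f(x_2,\dots,x_n,x_1)$ for an $n$-ary $f$; $\Sigma_M$ is the condition $f(y,y,x)=f(x,x,x)=f(x,y,y)$ for a ternary $f$. $P_2$ has vertices $\{0,1\}$ and the single edge $(0,1)$. *)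

theory Defs
  imports Main "HOL-Computational_Algebra.Primes"
begin

text \<open>A digraph is given by a vertex set V and an edge relation E \<subseteq> V \<times> V.
  Tuples of length k are lists of length k; positions are 0-indexed.\<close>

definition digraph :: "'a set \<Rightarrow> ('a \<times> 'a) set \<Rightarrow> bool" where
  "digraph V E \<longleftrightarrow> E \<subseteq> V \<times> V"

definition tuples :: "'a set \<Rightarrow> nat \<Rightarrow> 'a list set" where
  "tuples V k = {xs. length xs = k \<and> set xs \<subseteq> V}"

text \<open>Polymorphisms of arity k: homomorphisms H^k \<rightarrow> H (only their values on V^k matter).\<close>
definition Pol :: "'a set \<Rightarrow> ('a \<times> 'a) set \<Rightarrow> nat \<Rightarrow> ('a list \<Rightarrow> 'a) set" where
  "Pol V E k = {f. (\<forall>xs \<in> tuples V k. f xs \<in> V) \<and>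
     (\<forall>xs \<in> tuples V k. \<forall>ys \<in> tuples V k.
        (\<forall>i<k. (xs ! i, ys ! i) \<in> E) \<longrightarrow> (f xs, f ys) \<in> E)}"

definition minor :: "('a list \<Rightarrow> 'a) \<Rightarrow> nat \<Rightarrow> (nat \<Rightarrow> nat) \<Rightarrow> 'a list \<Rightarrow> 'a" where
  "minor f k \<sigma> xs = f (map (\<lambda>i. xs ! \<sigma> i) [0..<k])"

text \<open>A minor condition over symbols of type 's with arity function ar is a finite set of
  formal equations (f, \<sigma>, g, \<tau>, n) meaning f_\<sigma> = g_\<tau> where both sides are n-ary,
  \<sigma> : {0..<ar f} \<rightarrow> {0..<n}, \<tau> : {0..<ar g} \<rightarrow> {0..<n}.\<close>
type_synonym 's minor_eq = "'s \<times> (nat \<Rightarrow> nat) \<times> 's \<times> (nat \<Rightarrow> nat) \<times> nat"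

definition minor_condition :: "('s \<Rightarrow> nat) \<Rightarrow> 's minor_eq set \<Rightarrow> bool" where
  "minor_condition ar \<Sigma> \<longleftrightarrow> finite \<Sigma> \<and>
     (\<forall>(f, \<sigma>, g, \<tau>, n) \<in> \<Sigma>. (\<forall>i<ar f. \<sigma> i < n) \<and> (\<forall>i<ar g. \<tau> i < n))"

definition symbols :: "'s minor_eq set \<Rightarrow> 's set" where
  "symbols \<Sigma> = (\<Union>(f, \<sigma>, g, \<tau>, n) \<in> \<Sigma>. {f, g})"

definition Pol_satisfies :: "'a set \<Rightarrow> ('a \<times> 'a) set \<Rightarrow> ('s \<Rightarrow> nat) \<Rightarrow> 's minor_eq set \<Rightarrow> bool" where
  "Pol_satisfies V E ar \<Sigma> \<longleftrightarrow>
     (\<exists>I :: 's \<Rightarrow> ('a list \<Rightarrow> 'a).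
        (\<forall>s \<in> symbols \<Sigma>. I s \<in> Pol V E (ar s)) \<and>
        (\<forall>(f, \<sigma>, g, \<tau>, n) \<in> \<Sigma>. \<forall>xs \<in> tuples V n.
            minor (I f) (ar f) \<sigma> xs = minor (I g) (ar g) \<tau> xs))"

text \<open>\<Sigma>_n: f(x_1,...,x_n) = f(x_2,...,x_n,x_1), one n-ary symbol (of type unit).\<close>
definition Sigma_cyclic :: "nat \<Rightarrow> unit minor_eq set" where
  "Sigma_cyclic n = {((), (\<lambda>i. i), (), (\<lambda>i. (i + 1) mod n), n)}"

text \<open>\<Sigma>_M: f(y,y,x) = f(x,x,x) = f(x,y,y), ternary f; variables x = 0, y = 1.\<close>
definition Sigma_M :: "unit minor_eq set" where
  "Sigma_M = {((), (\<lambda>i. if i < 2 then 1 else 0), (), (\<lambda>i. 0), 2),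
              ((), (\<lambda>i. 0), (), (\<lambda>i. if i = 0 then 0 else 1), 2)}"

text \<open>The digraph P_2: vertices {0,1} (as False/True), single edge 0 \<rightarrow> 1.\<close>
definition P2_V :: "bool set" where "P2_V = UNIV"
definition P2_E :: "(bool \<times> bool) set" where "P2_E = {(False, True)}"

end

theory Submission
  imports Defs
begin

(* If G has a loop, constant maps satisfy every minor condition, so assume it has none.
   A closed walk of length p*q yields one of length q: apply a p-ary cyclic polymorphism to the
   p interleaved segments of length q. Hence cyclic polymorphisms of all prime arities exclude
   closed walks, and directed walks in G are shorter than |V|. The quasi-majority polymorphism m
   straightens oriented walks: an up-down-up zigzag whose middle segment is shortest is mapped
   by x \<mapsto> m(x,x,x) onto a directed walk of the same net length. So net lengths of oriented walks
   are bounded by |V|, the largest net length of an oriented walk ending in v is a level function,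
   and G is homomorphically equivalent to a directed path of that height. Polymorphisms of the
   path arise from those of P_2 by thresholding, and hom-equivalent digraphs satisfy the same
   minor conditions. *)

section \<open>Minor conditions along homomorphisms\<close>

definition digraph_hom ::
    "'a set \<Rightarrow> ('a \<times> 'a) set \<Rightarrow> 'b set \<Rightarrow> ('b \<times> 'b) set \<Rightarrow> ('a \<Rightarrow> 'b) \<Rightarrow> bool" where
  "digraph_hom V E V' E' h \<longleftrightarrow> h ` V \<subseteq> V' \<and> (\<forall>(x, y) \<in> E. (h x, h y) \<in> E')"

lemma minor_lift:
  assumes "\<forall>i<k. \<sigma> i < length xs"
  shows "minor (\<lambda>xs. \<Phi> (\<lambda>j. f (map (\<phi> j) xs))) k \<sigma> xs = \<Phi> (\<lambda>j. minor f k \<sigma> (map (\<phi> j) xs))"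
  using assms by (auto simp: minor_def intro!: arg_cong[where f = \<Phi>] ext arg_cong[where f = f])

text \<open>The map f \<mapsto> (xs \<mapsto> \<Phi> (\<lambda>j. f (map (\<phi> j) xs))) is a minion homomorphism by minor_lift,
  and minion homomorphisms preserve minor conditions.\<close>
lemma Pol_satisfies_lift:
  assumes "minor_condition ar \<Sigma>" "Pol_satisfies V' E' ar \<Sigma>"
    and "\<And>x j. x \<in> V \<Longrightarrow> \<phi> j x \<in> V'"
    and "\<And>f k. f \<in> Pol V' E' k \<Longrightarrow> (\<lambda>xs. \<Phi> (\<lambda>j. f (map (\<phi> j) xs))) \<in> Pol V E k"
  shows "Pol_satisfies V E ar \<Sigma>"
proof -
  obtain I where I_Pol: "\<forall>s \<in> symbols \<Sigma>. I s \<in> Pol V' E' (ar s)"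
    and I_eq: "\<forall>(f, \<sigma>, f', \<tau>, n) \<in> \<Sigma>. \<forall>xs \<in> tuples V' n.
                 minor (I f) (ar f) \<sigma> xs = minor (I f') (ar f') \<tau> xs"
    using assms(2) unfolding Pol_satisfies_def by blast
  define F where "F s xs = \<Phi> (\<lambda>j. I s (map (\<phi> j) xs))" for s xs
  have F_eq: "minor (F f) (ar f) \<sigma> xs = minor (F f') (ar f') \<tau> xs"
    if eq: "(f, \<sigma>, f', \<tau>, n) \<in> \<Sigma>" and xs: "xs \<in> tuples V n" for f \<sigma> f' \<tau> n xs
  proof -
    have "\<forall>i<ar f. \<sigma> i < length xs" "\<forall>i<ar f'. \<tau> i < length xs"
      using assms(1) eq xs unfolding minor_condition_def tuples_def by auto
    moreover have "map (\<phi> j) xs \<in> tuples V' n" for j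
      using assms(3) xs unfolding tuples_def by auto
    then have "minor (I f) (ar f) \<sigma> (map (\<phi> j) xs) = minor (I f') (ar f') \<tau> (map (\<phi> j) xs)" for j
      using I_eq eq by fastforce
    ultimately show ?thesis
      unfolding F_def by (simp add: minor_lift)
  qed
  show ?thesis
    unfolding Pol_satisfies_def
  proof (rule exI[where x = F], rule conjI)
    show "\<forall>s \<in> symbols \<Sigma>. F s \<in> Pol V E (ar s)"
      using I_Pol assms(4) unfolding F_def by blast
    show "\<forall>(f, \<sigma>, f', \<tau>, n) \<in> \<Sigma>. \<forall>xs \<in> tuples V n. minor (F f) (ar f) \<sigma> xs = minor (F f') (ar f') \<tau> xs"
      using F_eq by clarify blast
  qed
qed

lemma Pol_comp_hom:
  assumes f: "f \<in> Pol V' E' k" and h: "digraph_hom V E V' E' h" and g: "digraph_hom V' E' V E g"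
  shows "(\<lambda>xs. g (f (map h xs))) \<in> Pol V E k"
  unfolding Pol_def
proof (intro CollectI conjI ballI impI)
  have h_tuples: "map h xs \<in> tuples V' k" if "xs \<in> tuples V k" for xs
    using that h by (auto simp: tuples_def digraph_hom_def)
  fix xs assume "xs \<in> tuples V k"
  then have "f (map h xs) \<in> V'" using f h_tuples by (simp add: Pol_def)
  then show "g (f (map h xs)) \<in> V" using g by (auto simp: digraph_hom_def)
next
  fix xs ys assume xs: "xs \<in> tuples V k" and ys: "ys \<in> tuples V k"
    and edges: "\<forall>i<k. (xs ! i, ys ! i) \<in> E"
  have "map h xs \<in> tuples V' k" "map h ys \<in> tuples V' k"
    using xs ys h by (auto simp: tuples_def digraph_hom_def)
  moreover have "\<forall>i<k. (map h xs ! i, map h ys ! i) \<in> E'"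
    using xs ys edges h by (auto simp: tuples_def digraph_hom_def)
  ultimately have "(f (map h xs), f (map h ys)) \<in> E'"
    using f by (simp add: Pol_def)
  then show "(g (f (map h xs)), g (f (map h ys))) \<in> E"
    using g by (auto simp: digraph_hom_def)
qed

lemma Pol_satisfies_hom_equiv:
  assumes "minor_condition ar \<Sigma>" "Pol_satisfies V' E' ar \<Sigma>"
    and "digraph_hom V E V' E' h" "digraph_hom V' E' V E g"
  shows "Pol_satisfies V E ar \<Sigma>"
proof (rule Pol_satisfies_lift[where \<phi> = "\<lambda>_. h" and \<Phi> = "\<lambda>vals. g (vals ())", OF assms(1,2)])
  show "h x \<in> V'" if "x \<in> V" for x
    using assms(3) that by (auto simp: digraph_hom_def)
  show "(\<lambda>xs. g (f (map h xs))) \<in> Pol V E k" if "f \<in> Pol V' E' k" for f k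
    using Pol_comp_hom[OF that assms(3,4)] .
qed

section \<open>Polymorphisms of P_2 and of directed paths\<close>

definition dipath :: "nat \<Rightarrow> (nat \<times> nat) set" where
  "dipath K = {(i, Suc i) | i. i < K}"

lemma Pol_P2_constants:
  assumes "f \<in> Pol P2_V P2_E k"
  shows "f (replicate k False) = False \<and> f (replicate k True) = True"
proof -
  have "replicate k False \<in> tuples P2_V k" "replicate k True \<in> tuples P2_V k"
    by (auto simp: tuples_def P2_V_def)
  moreover have "\<forall>i<k. (replicate k False ! i, replicate k True ! i) \<in> P2_E"
    by (simp add: P2_E_def)
  ultimately have "(f (replicate k False), f (replicate k True)) \<in> P2_E"
    using assms unfolding Pol_def by blast
  then show ?thesis by (simp add: P2_E_def)
qed

definition threshold_lift :: "nat \<Rightarrow> (bool list \<Rightarrow> bool) \<Rightarrow> nat list \<Rightarrow> nat" where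
  "threshold_lift K f xs = (\<Sum>t<K. of_bool (f (map (\<lambda>x. t < x) xs)))"

lemma threshold_lift_le: "threshold_lift K f xs \<le> K"
proof -
  have "threshold_lift K f xs \<le> (\<Sum>t<K. 1)"
    unfolding threshold_lift_def by (rule sum_mono) simp
  then show ?thesis by simp
qed

lemma threshold_lift_Suc_map_Suc:
  assumes "f (replicate (length xs) True)"
  shows "threshold_lift (Suc K) f (map Suc xs) = Suc (threshold_lift K f xs)"
  using assms unfolding threshold_lift_def sum.lessThan_Suc_shift
  by (simp add: map_replicate_const comp_def del: sum_of_bool_eq)

lemma threshold_lift_Suc:
  assumes "\<forall>x \<in> set xs. x \<le> K" "\<not> f (replicate (length xs) False)"
  shows "threshold_lift (Suc K) f xs = threshold_lift K f xs"
proof -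
  have "map (\<lambda>x. K < x) xs = replicate (length xs) False"
    using assms(1) by (simp add: map_replicate_const[symmetric] not_less cong: map_cong)
  then show ?thesis
    using assms(2) unfolding threshold_lift_def by (simp del: sum_of_bool_eq)
qed

lemma threshold_lift_Pol:
  assumes "f \<in> Pol P2_V P2_E k"
  shows "threshold_lift K f \<in> Pol {..K} (dipath K) k"
  unfolding Pol_def
proof (intro CollectI conjI ballI impI)
  fix xs assume "xs \<in> tuples {..K} k"
  show "threshold_lift K f xs \<in> {..K}" using threshold_lift_le by simp
next
  fix xs ys assume xs: "xs \<in> tuples {..K} k" and ys: "ys \<in> tuples {..K} k"
    and edges: "\<forall>i<k. (xs ! i, ys ! i) \<in> dipath K"
  have P2_values: "f (replicate k False) = False" "f (replicate k True) = True"
    using Pol_P2_constants[OF assms] by auto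
  then have "0 < k" by (cases k) auto
  then obtain K' where K: "K = Suc K'" using edges by (cases K) (auto simp: dipath_def)
  have len: "length xs = k" "length ys = k" using xs ys by (auto simp: tuples_def)
  have "ys = map Suc xs" using edges len by (intro nth_equalityI) (auto simp: dipath_def)
  moreover have "\<forall>x \<in> set xs. x \<le> K'"
    using edges len K by (auto simp: dipath_def in_set_conv_nth less_Suc_eq_le)
  ultimately have ys_value: "threshold_lift K f ys = Suc (threshold_lift K' f xs)"
      and xs_value: "threshold_lift K f xs = threshold_lift K' f xs"
    using P2_values len K threshold_lift_Suc_map_Suc[of f xs K'] threshold_lift_Suc[of xs K' f]
    by auto
  have "threshold_lift K' f xs < K"
    using threshold_lift_le[of K' f xs] K by linarith
  then show "(threshold_lift K f xs, threshold_lift K f ys) \<in> dipath K"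
    unfolding ys_value xs_value dipath_def by blast
qed

lemma Pol_satisfies_dipath:
  assumes "minor_condition ar \<Sigma>" "Pol_satisfies P2_V P2_E ar \<Sigma>"
  shows "Pol_satisfies {..K} (dipath K) ar \<Sigma>"
proof (rule Pol_satisfies_lift[where \<phi> = "\<lambda>t x. t < x" and \<Phi> = "\<lambda>vals. \<Sum>t<K. of_bool (vals t)",
      OF assms])
  show "(\<lambda>xs. \<Sum>t<K. of_bool (f (map (\<lambda>x. t < x) xs))) \<in> Pol {..K} (dipath K) k"
    if "f \<in> Pol P2_V P2_E k" for f k
    using threshold_lift_Pol[OF that] unfolding threshold_lift_def .
qed (simp add: P2_V_def)

lemma Pol_satisfies_loop:
  assumes "(c, c) \<in> E" "c \<in> V"
  shows "Pol_satisfies V E ar \<Sigma>"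
  using assms unfolding Pol_satisfies_def Pol_def minor_def
  by (intro exI[where x = "\<lambda>s xs. c"]) simp

lemma Pol_P2_arity_pos:
  assumes "f \<in> Pol P2_V P2_E k"
  shows "0 < k"
  using Pol_P2_constants[OF assms] by (cases k) auto

lemma Pol_satisfies_empty_digraph:
  assumes "Pol_satisfies P2_V P2_E ar \<Sigma>"
  shows "Pol_satisfies {} E ar \<Sigma>"
proof -
  have "0 < ar s" if "s \<in> symbols \<Sigma>" for s
    using assms that Pol_P2_arity_pos unfolding Pol_satisfies_def by blast
  then have "\<forall>s \<in> symbols \<Sigma>. (\<lambda>xs. undefined) \<in> Pol {} E (ar s)"
    by (fastforce simp: Pol_def tuples_def)
  then show ?thesis
    unfolding Pol_satisfies_def minor_def by auto
qed

section \<open>Closed walks and cyclic polymorphisms\<close>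

definition cyclic_pol :: "'a set \<Rightarrow> ('a \<times> 'a) set \<Rightarrow> nat \<Rightarrow> ('a list \<Rightarrow> 'a) \<Rightarrow> bool" where
  "cyclic_pol V E n f \<longleftrightarrow> f \<in> Pol V E n \<and> (\<forall>xs \<in> tuples V n. f (rotate1 xs) = f xs)"

lemma Sigma_cyclic_imp_cyclic_pol:
  assumes "Pol_satisfies V E (\<lambda>_. n) (Sigma_cyclic n)"
  shows "\<exists>f. cyclic_pol V E n f"
proof -
  obtain I where I_Pol: "I () \<in> Pol V E n"
    and I_eq: "\<forall>xs \<in> tuples V n. minor (I ()) n (\<lambda>i. i) xs = minor (I ()) n (\<lambda>i. (i + 1) mod n) xs"
    using assms unfolding Pol_satisfies_def Sigma_cyclic_def symbols_def by auto
  have "I () (rotate1 xs) = I () xs" if xs: "xs \<in> tuples V n" for xs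
  proof -
    have len: "length xs = n" using xs by (simp add: tuples_def)
    have "map (\<lambda>i. xs ! ((i + 1) mod n)) [0..<n] = rotate1 xs"
      using len by (intro nth_equalityI) (simp_all add: nth_rotate1)
    then have "minor (I ()) n (\<lambda>i. (i + 1) mod n) xs = I () (rotate1 xs)"
      by (simp add: minor_def)
    moreover have "minor (I ()) n (\<lambda>i. i) xs = I () xs"
      using len map_nth[of xs] by (simp add: minor_def)
    ultimately show ?thesis
      using I_eq xs by simp
  qed
  then show ?thesis
    using I_Pol unfolding cyclic_pol_def by blast
qed

lemma walk_closed:
  assumes "E \<subseteq> V \<times> V" "w 0 \<in> V" "\<forall>i<n. (w i, w (Suc i)) \<in> E" "i \<le> n"
  shows "w i \<in> V"
  using assms(4)
proof (induction i)
  case (Suc i)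
  then have "(w i, w (Suc i)) \<in> E" using assms(3) by simp
  then show ?case using assms(1) by blast
qed (use assms(2) in simp)

lemma rotate1_sample:
  assumes "w (p * q) = w 0" "0 < p"
  shows "rotate1 (map (\<lambda>i. w (i * q)) [0..<p]) = map (\<lambda>i. w (q + i * q)) [0..<p]"
proof (rule nth_equalityI)
  fix i assume "i < length (rotate1 (map (\<lambda>i. w (i * q)) [0..<p]))"
  then have "i < p" by simp
  then show "rotate1 (map (\<lambda>i. w (i * q)) [0..<p]) ! i = map (\<lambda>i. w (q + i * q)) [0..<p] ! i"
    using assms by (cases "Suc i = p") (auto simp: nth_rotate1)
qed simp

lemma closed_walk_shrink:
  assumes "E \<subseteq> V \<times> V" "cyclic_pol V E p f" "0 < p" "0 < q" "(c, c) \<in> E ^^ (p * q)"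
  shows "\<exists>c'. (c', c') \<in> E ^^ q"
proof -
  obtain w where w: "w 0 = c" "w (p * q) = c" "\<forall>i<p * q. (w i, w (Suc i)) \<in> E"
    using assms(5) relpow_fun_conv by metis
  have "c \<in> V" using w(3) assms(1,3,4) w(1) by (metis mult_pos_pos SigmaD1 subsetD)
  then have w_V: "w i \<in> V" if "i \<le> p * q" for i
    using walk_closed[OF assms(1) _ w(3) that] w(1) by simp
  txt \<open>Shifting j by q rotates t j, which f does not notice.\<close>
  define t where "t j = map (\<lambda>i. w (j + i * q)) [0..<p]" for j
  have index_bound: "j + i * q \<le> p * q" if "j \<le> q" "i < p" for i j
  proof -
    have "j + i * q \<le> Suc i * q" using that by simp
    also have "\<dots> \<le> p * q" using that by (intro mult_le_mono1) simp
    finally show ?thesis .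
  qed
  have t_tuples: "t j \<in> tuples V p" if "j \<le> q" for j
    using w_V index_bound that by (auto simp: t_def tuples_def)
  have "(f (t j), f (t (Suc j))) \<in> E" if "j < q" for j
  proof -
    have "\<forall>i<p. (t j ! i, t (Suc j) ! i) \<in> E"
    proof (intro allI impI)
      fix i assume "i < p"
      then have "j + i * q < p * q" using index_bound[of "Suc j" i] that by simp
      then show "(t j ! i, t (Suc j) ! i) \<in> E" using w(3) \<open>i < p\<close> by (simp add: t_def)
    qed
    then show ?thesis
      using assms(2) t_tuples that unfolding cyclic_pol_def Pol_def by simp
  qed
  then have "(f (t 0), f (t q)) \<in> E ^^ q"
    unfolding relpow_fun_conv by (intro exI[of _ "\<lambda>j. f (t j)"]) auto
  moreover have "t q = rotate1 (t 0)"
    using rotate1_sample[of w p q] w assms(3) by (simp add: t_def)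
  then have "f (t q) = f (t 0)"
    using assms(2) t_tuples[of 0] unfolding cyclic_pol_def by simp
  ultimately show ?thesis by auto
qed

lemma closed_walk_imp_loop:
  assumes "E \<subseteq> V \<times> V" "\<And>p. prime p \<Longrightarrow> \<exists>f. cyclic_pol V E p f"
    and "(c, c) \<in> E ^^ n" "0 < n"
  shows "\<exists>c. (c, c) \<in> E"
  using assms(3,4)
proof (induction n arbitrary: c rule: less_induct)
  case (less n)
  show ?case
  proof (cases "n = 1")
    case True
    then show ?thesis using less.prems by auto
  next
    case False
    then obtain p where p: "prime p" "p dvd n" using prime_factor_nat by blast
    then obtain q where n: "n = p * q" by blast
    have "1 < p" using prime_gt_1_nat[OF p(1)] .
    moreover have "0 < q" using less.prems(2) n by simp
    ultimately have "q < n" using n n_less_m_mult_n by simp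
    obtain f where "cyclic_pol V E p f" using assms(2) p(1) by blast
    moreover have "(c, c) \<in> E ^^ (p * q)" using less.prems(1) n by simp
    ultimately obtain c' where "(c', c') \<in> E ^^ q"
      using closed_walk_shrink[OF assms(1) _ _ \<open>0 < q\<close>] \<open>1 < p\<close> by (meson less_trans zero_less_one)
    then show ?thesis using less.IH \<open>q < n\<close> \<open>0 < q\<close> by blast
  qed
qed

lemma long_walk_imp_closed_walk:
  assumes "finite V" "E \<subseteq> V \<times> V" "u \<in> V" "(u, v) \<in> E ^^ d" "card V \<le> d"
  shows "\<exists>c n. 0 < n \<and> (c, c) \<in> E ^^ n"
proof -
  obtain w where w: "w 0 = u" "\<forall>i<d. (w i, w (Suc i)) \<in> E"
    using assms(4) relpow_fun_conv by metis
  have "w ` {..d} \<subseteq> V"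
    using walk_closed[OF assms(2) _ w(2)] w(1) assms(3) by (simp add: image_subset_iff)
  then have "card (w ` {..d}) \<le> card V"
    by (rule card_mono[OF assms(1)])
  then have "card (w ` {..d}) \<noteq> card {..d}"
    using assms(5) by simp
  then have "\<not> inj_on w {..d}"
    using card_image by blast
  then obtain i j where ij: "i < j" "j \<le> d" "w i = w j"
    unfolding inj_on_def by (metis atMost_iff linorder_neqE_nat)
  have "(w i, w (i + (j - i))) \<in> E ^^ (j - i)"
    unfolding relpow_fun_conv using w(2) ij by (intro exI[of _ "\<lambda>k. w (i + k)"]) auto
  then show ?thesis
    using ij by (intro exI[of _ "w i"] exI[of _ "j - i"]) simp
qed

lemma walk_imp_dipath_hom:
  assumes "E \<subseteq> V \<times> V" "u \<in> V" "(u, v) \<in> E ^^ K"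
  shows "\<exists>g. digraph_hom {..K} (dipath K) V E g"
proof -
  obtain w where w: "w 0 = u" "\<forall>i<K. (w i, w (Suc i)) \<in> E"
    using assms(3) relpow_fun_conv by metis
  then have "digraph_hom {..K} (dipath K) V E w"
    using walk_closed[OF assms(1) _ w(2)] assms(2) by (auto simp: digraph_hom_def dipath_def)
  then show ?thesis by blast
qed

section \<open>Oriented walks\<close>

lemma relpow_in_iff:
  assumes "E \<subseteq> V \<times> V" "(x, y) \<in> E ^^ n"
  shows "x \<in> V \<longleftrightarrow> y \<in> V"
proof (cases n)
  case (Suc k)
  then have "(x, y) \<in> E\<^sup>+" using assms(2) trancl_power by blast
  then show ?thesis using trancl_subset_Sigma[OF assms(1)] by blast
qed (use assms in simp)

lemma relpow_converse: "(E\<inverse>) ^^ n = (E ^^ n)\<inverse>" for E :: "('a \<times> 'a) set"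
proof (induction n)
  case (Suc n)
  then have "(E\<inverse>) ^^ Suc n = (E ^^ n)\<inverse> O E\<inverse>" by simp
  also have "\<dots> = (E O E ^^ n)\<inverse>" by (simp add: converse_relcomp)
  also have "\<dots> = (E ^^ Suc n)\<inverse>" by (simp add: relpow_commute)
  finally show ?case .
qed simp

definition int_relpow :: "('a \<times> 'a) set \<Rightarrow> int \<Rightarrow> ('a \<times> 'a) set" where
  "int_relpow E a = (if 0 \<le> a then E ^^ nat a else (E ^^ nat (- a))\<inverse>)"

text \<open>An oriented walk, given by the signed lengths of its maximal directed segments
  (negative ones are traversed against the edges); its net length is the sum of the list.\<close>
fun zigzag :: "('a \<times> 'a) set \<Rightarrow> int list \<Rightarrow> ('a \<times> 'a) set" where
  "zigzag E [] = Id"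
| "zigzag E (a # ps) = int_relpow E a O zigzag E ps"

lemma zigzag_append: "zigzag E (as @ bs) = zigzag E as O zigzag E bs"
  by (induction as) (auto simp: O_assoc)

lemma int_relpow_add:
  assumes "0 \<le> a * b"
  shows "int_relpow E a O int_relpow E b = int_relpow E (a + b)"
proof -
  consider "0 \<le> a" "0 \<le> b" | "a \<le> 0" "b \<le> 0"
    using assms by (auto simp: zero_le_mult_iff)
  then show ?thesis
  proof cases
    case 1
    then show ?thesis by (simp add: int_relpow_def nat_add_distrib relpow_add)
  next
    case 2
    then have "nat (- (a + b)) = nat (- b) + nat (- a)" by simp
    then show ?thesis
      using 2 by (auto simp: int_relpow_def relpow_add converse_relcomp)
  qed
qed

lemma zigzag_merge:
  assumes "0 \<le> a * b"
  shows "zigzag E (as @ a # b # bs) = zigzag E (as @ (a + b) # bs)"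
  using int_relpow_add[OF assms, of E] by (simp add: zigzag_append O_assoc[symmetric])

lemma int_relpow_in_iff:
  assumes "E \<subseteq> V \<times> V" "(x, y) \<in> int_relpow E a"
  shows "x \<in> V \<longleftrightarrow> y \<in> V"
  using assms relpow_in_iff[OF assms(1)] by (auto simp: int_relpow_def split: if_splits)

lemma zigzag_closed:
  assumes "E \<subseteq> V \<times> V" "(x, y) \<in> zigzag E ps" "x \<in> V"
  shows "y \<in> V"
  using assms(2,3)
proof (induction ps arbitrary: x)
  case (Cons a ps)
  then obtain z where "(x, z) \<in> int_relpow E a" "(z, y) \<in> zigzag E ps" by auto
  then show ?case using Cons int_relpow_in_iff[OF assms(1)] by blast
qed simp

lemma int_relpow_converse: "int_relpow (E\<inverse>) a = int_relpow E (- a)"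
  by (simp add: int_relpow_def relpow_converse)

lemma zigzag_converse: "zigzag (E\<inverse>) ps = zigzag E (map uminus ps)"
  by (induction ps) (simp_all add: int_relpow_converse)

lemma alternating_min_cases:
  fixes ps :: "int list"
  assumes "2 \<le> length ps" and alt: "\<forall>k. Suc k < length ps \<longrightarrow> ps ! k * ps ! Suc k < 0"
  obtains (head) a b rest where "ps = a # b # rest" "a * b < 0" "\<bar>a\<bar> \<le> \<bar>b\<bar>"
    | (last) rest a b where "ps = rest @ [a, b]" "a * b < 0" "\<bar>b\<bar> \<le> \<bar>a\<bar>"
    | (shortcut) as l c r bs where "ps = as @ [l, c, r] @ bs"
        "l * c < 0" "c * r < 0" "\<bar>c\<bar> \<le> \<bar>l\<bar>" "\<bar>c\<bar> \<le> \<bar>r\<bar>"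
proof -
  obtain i where i: "i < length ps" and i_min: "\<And>j. j < length ps \<Longrightarrow> \<bar>ps ! i\<bar> \<le> \<bar>ps ! j\<bar>"
    using ex_has_least_nat[of "\<lambda>i. i < length ps" 0 "\<lambda>i. nat \<bar>ps ! i\<bar>"] assms(1) by force
  consider "i = 0" | "Suc i = length ps" | "0 < i" "Suc i < length ps"
    using i by linarith
  then show ?thesis
  proof cases
    case 1
    obtain a b rest where ps: "ps = a # b # rest"
      using assms(1) by (cases ps; cases "tl ps") auto
    show ?thesis
      by (rule head[OF ps]) (use alt[rule_format, of 0] i_min[of 1] 1 in \<open>simp_all add: ps\<close>)
  next
    case 2
    obtain rest' b where "ps = rest' @ [b]"
      using assms(1) by (cases ps rule: rev_exhaust) auto
    moreover obtain rest a where "rest' = rest @ [a]"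
      using assms(1) calculation by (cases rest' rule: rev_exhaust) auto
    ultimately have ps: "ps = rest @ [a, b]" by simp
    show ?thesis
      by (rule last[OF ps])
        (use alt[rule_format, of "length rest"] i_min[of "length rest"] 2 in \<open>simp_all add: ps nth_append\<close>)
  next
    case 3
    define k where "k = i - 1"
    have k: "i = Suc k" "Suc (Suc k) < length ps" using 3 by (auto simp: k_def)
    then have "ps = take k ps @ [ps ! k, ps ! Suc k, ps ! Suc (Suc k)] @ drop (Suc (Suc (Suc k))) ps"
      by (simp add: Cons_nth_drop_Suc)
    moreover have "ps ! k * ps ! Suc k < 0" "ps ! Suc k * ps ! Suc (Suc k) < 0"
      using alt k by simp_all
    moreover have "\<bar>ps ! Suc k\<bar> \<le> \<bar>ps ! k\<bar>" "\<bar>ps ! Suc k\<bar> \<le> \<bar>ps ! Suc (Suc k)\<bar>"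
      using i_min k by auto
    ultimately show ?thesis using shortcut by blast
  qed
qed

lemma zigzag_reduction_cases:
  fixes ps :: "int list"
  assumes "2 \<le> length ps"
  obtains (merge) as a b bs where "ps = as @ a # b # bs" "0 \<le> a * b"
    | (prefix) as bs where "ps = as @ bs" "as \<noteq> []" "sum_list as \<le> 0"
    | (suffix) as bs where "ps = as @ bs" "bs \<noteq> []" "sum_list bs \<le> 0"
    | (shortcut) as l c r bs where "ps = as @ [l, c, r] @ bs"
        "l * c < 0" "c * r < 0" "\<bar>c\<bar> \<le> \<bar>l\<bar>" "\<bar>c\<bar> \<le> \<bar>r\<bar>"
proof (cases "\<exists>k. Suc k < length ps \<and> 0 \<le> ps ! k * ps ! Suc k")
  case True
  then obtain k where k: "Suc k < length ps" "0 \<le> ps ! k * ps ! Suc k" by blast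
  then have "ps = take k ps @ ps ! k # ps ! Suc k # drop (Suc (Suc k)) ps"
    by (simp add: Cons_nth_drop_Suc)
  then show ?thesis using merge k(2) by blast
next
  case False
  then have "\<forall>k. Suc k < length ps \<longrightarrow> ps ! k * ps ! Suc k < 0"
    by force
  with assms show ?thesis
  proof (cases rule: alternating_min_cases)
    case (head a b rest)
    then have "a \<le> 0 \<or> a + b \<le> 0" by (auto simp: mult_less_0_iff)
    then show ?thesis
      using prefix[of "[a]" "b # rest"] prefix[of "[a, b]" rest] head(1) by auto
  next
    case (last rest a b)
    then have "b \<le> 0 \<or> a + b \<le> 0" by (auto simp: mult_less_0_iff)
    then show ?thesis
      using suffix[of "rest @ [a]" "[b]"] suffix[of rest "[a, b]"] last(1) by auto
  qed (rule shortcut)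
qed

lemma zigzag_single_imp_walk:
  assumes "(x, y) \<in> zigzag E ps" "length ps \<le> 1" "int d \<le> sum_list ps"
  shows "\<exists>v. (x, v) \<in> E ^^ d"
proof (cases ps)
  case (Cons a ps')
  then have "ps = [a]" using assms(2) by simp
  then have "(x, y) \<in> E ^^ (d + (nat a - d))"
    using assms by (auto simp: int_relpow_def)
  then show ?thesis by (auto simp: relpow_add)
qed (use assms in simp)

section \<open>Level functions\<close>

locale bounded_zigzags =
  fixes V :: "'a set" and E :: "('a \<times> 'a) set" and N :: nat
  assumes edges_in: "E \<subseteq> V \<times> V"
    and net_length_bound: "x \<in> V \<Longrightarrow> (x, y) \<in> zigzag E ps \<Longrightarrow> sum_list ps < int N"
begin

definition net_lengths :: "'a \<Rightarrow> nat set" where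
  "net_lengths v = {d. \<exists>x ps. x \<in> V \<and> (x, v) \<in> zigzag E ps \<and> sum_list ps = int d}"

definition height :: "'a \<Rightarrow> nat" where
  "height v = Max (net_lengths v)"

lemma finite_net_lengths: "finite (net_lengths v)"
proof (rule finite_subset)
  show "net_lengths v \<subseteq> {..<N}"
    using net_length_bound by (fastforce simp: net_lengths_def)
qed simp

lemma height_ge: "d \<in> net_lengths v \<Longrightarrow> d \<le> height v"
  unfolding height_def using finite_net_lengths by simp

lemma height_in_net_lengths:
  assumes "v \<in> V"
  shows "height v \<in> net_lengths v"
proof -
  have "0 \<in> net_lengths v"
    using assms by (force simp: net_lengths_def intro: exI[of _ "[]"])
  then show ?thesis
    unfolding height_def using finite_net_lengths by (intro Max_in) auto
qed

lemma height_edge: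
  assumes "(u, v) \<in> E"
  shows "height v = Suc (height u)"
proof -
  have "u \<in> V" "v \<in> V" using assms edges_in by auto
  obtain x ps where x: "x \<in> V" "(x, u) \<in> zigzag E ps" "sum_list ps = int (height u)"
    using height_in_net_lengths[OF \<open>u \<in> V\<close>] by (auto simp: net_lengths_def)
  have "(x, v) \<in> zigzag E (ps @ [1])"
    using x(2) assms by (auto simp: zigzag_append int_relpow_def)
  then have "Suc (height u) \<in> net_lengths v"
    using x by (force simp: net_lengths_def)
  then have le: "Suc (height u) \<le> height v" by (rule height_ge)
  obtain y qs where y: "y \<in> V" "(y, v) \<in> zigzag E qs" "sum_list qs = int (height v)"
    using height_in_net_lengths[OF \<open>v \<in> V\<close>] by (auto simp: net_lengths_def)
  have "(y, u) \<in> zigzag E (qs @ [-1])"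
    using y(2) assms by (auto simp: zigzag_append int_relpow_def)
  then have "height v - 1 \<in> net_lengths u"
    using y le by (force simp: net_lengths_def)
  then have "height v - 1 \<le> height u" by (rule height_ge)
  with le show ?thesis by simp
qed

lemma finite_heights: "finite (height ` V)"
proof (rule finite_subset)
  show "height ` V \<subseteq> {..<N}"
    using height_in_net_lengths net_length_bound by (fastforce simp: net_lengths_def)
qed simp

lemma height_hom: "digraph_hom V E {..Max (height ` V)} (dipath (Max (height ` V))) height"
  unfolding digraph_hom_def
proof (intro conjI ballI)
  show "height ` V \<subseteq> {..Max (height ` V)}"
    using finite_heights by auto
  fix e assume "e \<in> E"
  then obtain u v where e: "e = (u, v)" "(u, v) \<in> E" by (cases e) auto
  then have "height v \<le> Max (height ` V)"
    using edges_in finite_heights by auto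
  then show "case e of (x, y) \<Rightarrow> (height x, height y) \<in> dipath (Max (height ` V))"
    using height_edge[OF e(2)] e(1) by (simp add: dipath_def)
qed

lemma max_height_net_length:
  assumes "V \<noteq> {}"
  shows "\<exists>x \<in> V. \<exists>y ps. (x, y) \<in> zigzag E ps \<and> sum_list ps = int (Max (height ` V))"
proof -
  obtain v where "v \<in> V" "height v = Max (height ` V)"
    using Max_in[OF finite_heights] assms by fastforce
  then show ?thesis
    using height_in_net_lengths[OF \<open>v \<in> V\<close>] by (auto simp: net_lengths_def)
qed

end

section \<open>Quasi-majority polymorphisms\<close>

locale quasi_majority =
  fixes V :: "'a set" and E :: "('a \<times> 'a) set" and m :: "'a list \<Rightarrow> 'a"
  assumes edges_in: "E \<subseteq> V \<times> V"
    and m_closed: "x \<in> V \<Longrightarrow> y \<in> V \<Longrightarrow> z \<in> V \<Longrightarrow> m [x, y, z] \<in> V"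
    and m_hom: "(x1, y1) \<in> E \<Longrightarrow> (x2, y2) \<in> E \<Longrightarrow> (x3, y3) \<in> E \<Longrightarrow>
      (m [x1, x2, x3], m [y1, y2, y3]) \<in> E"
    and m_yyx: "x \<in> V \<Longrightarrow> y \<in> V \<Longrightarrow> m [y, y, x] = m [x, x, x]"
    and m_xyy: "x \<in> V \<Longrightarrow> y \<in> V \<Longrightarrow> m [x, y, y] = m [x, x, x]"

lemma Sigma_M_imp_quasi_majority:
  assumes "digraph V E" "Pol_satisfies V E (\<lambda>_. 3) Sigma_M"
  shows "\<exists>m. quasi_majority V E m"
proof -
  obtain I where I_Pol: "I () \<in> Pol V E 3"
    and I_eq: "\<forall>xs \<in> tuples V 2.
      minor (I ()) 3 (\<lambda>i. if i < 2 then 1 else 0) xs = minor (I ()) 3 (\<lambda>i. 0) xs \<and>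
      minor (I ()) 3 (\<lambda>i. 0) xs = minor (I ()) 3 (\<lambda>i. if i = 0 then 0 else 1) xs"
    using assms(2) unfolding Pol_satisfies_def Sigma_M_def symbols_def by auto
  have edges_in: "E \<subseteq> V \<times> V" using assms(1) by (simp add: digraph_def)
  have upt_3: "[0..<3] = [0, 1, 2 :: nat]" by (simp add: upt_rec)
  have "quasi_majority V E (I ())"
  proof
    show "I () [x, y, z] \<in> V" if "x \<in> V" "y \<in> V" "z \<in> V" for x y z
      using I_Pol that by (simp add: Pol_def tuples_def)
    show "(I () [x1, x2, x3], I () [y1, y2, y3]) \<in> E"
      if "(x1, y1) \<in> E" "(x2, y2) \<in> E" "(x3, y3) \<in> E" for x1 y1 x2 y2 x3 y3
    proof -
      have "[x1, x2, x3] \<in> tuples V 3" "[y1, y2, y3] \<in> tuples V 3"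
        using that edges_in by (auto simp: tuples_def)
      moreover have "\<forall>i<3. ([x1, x2, x3] ! i, [y1, y2, y3] ! i) \<in> E"
        using that by (auto simp: less_Suc_eq numeral_eq_Suc)
      ultimately show ?thesis using I_Pol by (simp add: Pol_def)
    qed
    show "I () [y, y, x] = I () [x, x, x]" "I () [x, y, y] = I () [x, x, x]"
      if "x \<in> V" "y \<in> V" for x y
      using I_eq[rule_format, of "[x, y]"] that by (simp_all add: tuples_def minor_def upt_3)
  qed (fact edges_in)
  then show ?thesis by blast
qed

context quasi_majority
begin

definition diag :: "'a \<Rightarrow> 'a" where
  "diag x = m [x, x, x]"

lemma diag_closed: "x \<in> V \<Longrightarrow> diag x \<in> V"
  by (simp add: diag_def m_closed)

lemma m_relpow:
  "(x1, y1) \<in> E ^^ n \<Longrightarrow> (x2, y2) \<in> E ^^ n \<Longrightarrow> (x3, y3) \<in> E ^^ n \<Longrightarrow>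
    (m [x1, x2, x3], m [y1, y2, y3]) \<in> E ^^ n"
proof (induction n arbitrary: y1 y2 y3)
  case (Suc n)
  then obtain z1 z2 z3 where
    "(x1, z1) \<in> E ^^ n" "(z1, y1) \<in> E" "(x2, z2) \<in> E ^^ n" "(z2, y2) \<in> E"
    "(x3, z3) \<in> E ^^ n" "(z3, y3) \<in> E" by auto
  then have "(m [x1, x2, x3], m [z1, z2, z3]) \<in> E ^^ n" "(m [z1, z2, z3], m [y1, y2, y3]) \<in> E"
    using Suc.IH m_hom by blast+
  then show ?case by (rule relpow_Suc_I)
qed simp

lemma diag_relpow: "(x, y) \<in> E ^^ n \<Longrightarrow> (diag x, diag y) \<in> E ^^ n"
  unfolding diag_def by (rule m_relpow)

lemma diag_zigzag: "(x, y) \<in> zigzag E ps \<Longrightarrow> (diag x, diag y) \<in> zigzag E ps"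
proof (induction ps arbitrary: x)
  case (Cons a ps)
  then obtain z where "(x, z) \<in> int_relpow E a" "(z, y) \<in> zigzag E ps" by auto
  then have "(diag x, diag z) \<in> int_relpow E a" "(diag z, diag y) \<in> zigzag E ps"
    using Cons.IH diag_relpow by (auto simp: int_relpow_def split: if_splits)
  then show ?case by auto
qed simp

lemma diag_square:
  assumes "(x, y) \<in> E ^^ n" "(z, y) \<in> E ^^ n" "(z, w) \<in> E ^^ n" "x \<in> V"
  shows "(diag x, diag w) \<in> E ^^ n"
proof -
  have "y \<in> V" "z \<in> V" "w \<in> V"
    using relpow_in_iff[OF edges_in assms(1)] relpow_in_iff[OF edges_in assms(2)]
      relpow_in_iff[OF edges_in assms(3)] assms(4) by simp_all
  have "(m [x, z, z], m [y, y, w]) \<in> E ^^ n"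
    using m_relpow[OF assms(1-3)] .
  moreover have "m [x, z, z] = diag x" "m [y, y, w] = diag w"
    using m_xyy[OF \<open>x \<in> V\<close> \<open>z \<in> V\<close>] m_yyx[OF \<open>w \<in> V\<close> \<open>y \<in> V\<close>]
    by (simp_all add: diag_def)
  ultimately show ?thesis by simp
qed

lemma peak_shortcut:
  assumes "0 < l" "c < 0" "0 < r" "- c \<le> l" "- c \<le> r"
    and "(x, w) \<in> zigzag E [l, c, r]" "x \<in> V"
  shows "(diag x, diag w) \<in> int_relpow E (l + c + r)"
proof -
  define L b R where "L = nat l" and "b = nat (- c)" and "R = nat r"
  have "b \<le> L" "b \<le> R" using assms by (auto simp: L_def b_def R_def)
  from assms obtain y z where "(x, y) \<in> E ^^ L" "(z, y) \<in> E ^^ b" "(z, w) \<in> E ^^ R"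
    by (auto simp: int_relpow_def L_def b_def R_def)
  moreover have "E ^^ L = E ^^ (L - b) O E ^^ b" "E ^^ R = E ^^ b O E ^^ (R - b)"
    using \<open>b \<le> L\<close> \<open>b \<le> R\<close> by (metis le_add_diff_inverse le_add_diff_inverse2 relpow_add)+
  ultimately obtain x' w' where x': "(x, x') \<in> E ^^ (L - b)" "(x', y) \<in> E ^^ b"
    and w': "(z, w') \<in> E ^^ b" "(w', w) \<in> E ^^ (R - b)"
    by auto
  have "x' \<in> V" using x'(1) \<open>x \<in> V\<close> relpow_in_iff[OF edges_in] by blast
  then have "(diag x', diag w') \<in> E ^^ b"
    using diag_square x'(2) \<open>(z, y) \<in> E ^^ b\<close> w'(1) by blast
  then have "(diag x, diag w) \<in> E ^^ (L - b + b + (R - b))"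
    using diag_relpow[OF x'(1)] diag_relpow[OF w'(2)] by (auto simp: relpow_add)
  moreover have "L - b + b + (R - b) = nat (l + c + r)"
    using assms by (simp add: L_def b_def R_def)
  ultimately show ?thesis
    using assms by (simp add: int_relpow_def)
qed

lemma quasi_majority_converse: "quasi_majority V (E\<inverse>) m"
proof
  show "E\<inverse> \<subseteq> V \<times> V" using edges_in by auto
  show "(m [x1, x2, x3], m [y1, y2, y3]) \<in> E\<inverse>"
    if "(x1, y1) \<in> E\<inverse>" "(x2, y2) \<in> E\<inverse>" "(x3, y3) \<in> E\<inverse>" for x1 y1 x2 y2 x3 y3
    using m_hom that by simp
qed (fact m_closed m_yyx m_xyy)+

lemma triple_shortcut:
  assumes "l * c < 0" "c * r < 0" "\<bar>c\<bar> \<le> \<bar>l\<bar>" "\<bar>c\<bar> \<le> \<bar>r\<bar>"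
    and "(x, w) \<in> zigzag E [l, c, r]" "x \<in> V"
  shows "(diag x, diag w) \<in> int_relpow E (l + c + r)"
proof (cases "c < 0")
  case True
  then show ?thesis
    using assms peak_shortcut by (auto simp: mult_less_0_iff)
next
  case False
  txt \<open>A valley of E is a peak of the converse digraph, which has the same polymorphisms.\<close>
  interpret converse: quasi_majority V "E\<inverse>" m
    by (rule quasi_majority_converse)
  have "(x, w) \<in> zigzag (E\<inverse>) [- l, - c, - r]"
    unfolding zigzag_converse using assms(5) by simp
  then have "(diag x, diag w) \<in> int_relpow (E\<inverse>) (- l + - c + - r)"
    using False assms by (intro converse.peak_shortcut) (auto simp: mult_less_0_iff)
  moreover have "- (- l + - c + - r) = l + c + r" by simp
  ultimately show ?thesis by (simp only: int_relpow_converse)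
qed

lemma zigzag_shortcut:
  assumes "l * c < 0" "c * r < 0" "\<bar>c\<bar> \<le> \<bar>l\<bar>" "\<bar>c\<bar> \<le> \<bar>r\<bar>"
    and "(x, y) \<in> zigzag E (as @ [l, c, r] @ bs)" "x \<in> V"
  shows "(diag x, diag y) \<in> zigzag E (as @ [l + c + r] @ bs)"
proof -
  obtain x' y' where x': "(x, x') \<in> zigzag E as"
    and y': "(x', y') \<in> zigzag E [l, c, r]" "(y', y) \<in> zigzag E bs"
    using assms(5) by (auto simp: zigzag_append)
  have "x' \<in> V"
    using zigzag_closed[OF edges_in x' assms(6)] .
  then have "(diag x', diag y') \<in> zigzag E [l + c + r]"
    using triple_shortcut assms(1-4) y'(1) by auto
  then show ?thesis
    using diag_zigzag[OF x'] diag_zigzag[OF y'(2)] by (auto simp: zigzag_append)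
qed

lemma zigzag_imp_walk:
  assumes "(x, y) \<in> zigzag E ps" "x \<in> V" "int d \<le> sum_list ps"
  shows "\<exists>u \<in> V. \<exists>v. (u, v) \<in> E ^^ d"
  using assms
proof (induction "length ps" arbitrary: ps x y rule: less_induct)
  case less
  show ?case
  proof (cases "length ps \<le> 1")
    case True
    then show ?thesis
      using zigzag_single_imp_walk[OF less.prems(1) True less.prems(3)] less.prems(2) by blast
  next
    case False
    then have "2 \<le> length ps" by simp
    then show ?thesis
    proof (cases rule: zigzag_reduction_cases)
      case (merge as a b bs)
      then have "(x, y) \<in> zigzag E (as @ (a + b) # bs)"
        using less.prems(1) zigzag_merge by metis
      then show ?thesis
        by (intro less.hyps[of "as @ (a + b) # bs" x y]) (use less.prems merge in auto)
    next
      case (prefix as bs)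
      then obtain z where "(x, z) \<in> zigzag E as" "(z, y) \<in> zigzag E bs"
        using less.prems(1) by (auto simp: zigzag_append)
      moreover have "z \<in> V"
        using zigzag_closed[OF edges_in] calculation(1) less.prems(2) by blast
      ultimately show ?thesis
        by (intro less.hyps[of bs z y]) (use less.prems prefix in auto)
    next
      case (suffix as bs)
      then obtain z where "(x, z) \<in> zigzag E as"
        using less.prems(1) by (auto simp: zigzag_append)
      then show ?thesis
        by (intro less.hyps[of as x z]) (use less.prems suffix in auto)
    next
      case (shortcut as l c r bs)
      then have "(diag x, diag y) \<in> zigzag E (as @ [l + c + r] @ bs)"
        using zigzag_shortcut less.prems(1,2) by blast
      then show ?thesis
        by (intro less.hyps[of "as @ [l + c + r] @ bs" "diag x" "diag y"])
          (use less.prems shortcut diag_closed in auto)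
    qed
  qed
qed

lemma hom_equivalent_dipath:
  assumes "V \<noteq> {}" and "\<And>x y ps. x \<in> V \<Longrightarrow> (x, y) \<in> zigzag E ps \<Longrightarrow> sum_list ps < int N"
  obtains K h g where "digraph_hom V E {..K} (dipath K) h" "digraph_hom {..K} (dipath K) V E g"
proof -
  interpret bounded_zigzags V E N
    by (rule bounded_zigzags.intro[OF edges_in assms(2)])
  obtain x y ps where "x \<in> V" "(x, y) \<in> zigzag E ps" "sum_list ps = int (Max (height ` V))"
    using max_height_net_length[OF assms(1)] by blast
  then obtain u v where "u \<in> V" "(u, v) \<in> E ^^ Max (height ` V)"
    using zigzag_imp_walk by force
  then obtain g where "digraph_hom {..Max (height ` V)} (dipath (Max (height ` V))) V E g"
    using walk_imp_dipath_hom[OF edges_in] by blast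
  then show ?thesis
    by (rule that[OF height_hom])
qed

lemma net_length_less_card:
  assumes "finite V" "\<And>p. prime p \<Longrightarrow> \<exists>f. cyclic_pol V E p f" "\<forall>c. (c, c) \<notin> E"
    and "x \<in> V" "(x, y) \<in> zigzag E ps"
  shows "sum_list ps < int (card V)"
proof (rule ccontr)
  assume "\<not> sum_list ps < int (card V)"
  then obtain u v where "u \<in> V" "(u, v) \<in> E ^^ card V"
    using zigzag_imp_walk assms(4,5) by force
  then obtain c n where "0 < n" "(c, c) \<in> E ^^ n"
    using long_walk_imp_closed_walk[OF assms(1) edges_in] by blast
  then show False
    using closed_walk_imp_loop[OF edges_in assms(2)] assms(3) by blast
qed

lemma loopless_hom_equivalent_dipath:
  assumes "finite V" "V \<noteq> {}" "\<And>p. prime p \<Longrightarrow> \<exists>f. cyclic_pol V E p f" "\<forall>c. (c, c) \<notin> E"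
  obtains K h g where "digraph_hom V E {..K} (dipath K) h" "digraph_hom {..K} (dipath K) V E g"
proof -
  have "sum_list ps < int (card V)" if "x \<in> V" "(x, y) \<in> zigzag E ps" for x y ps
    using net_length_less_card[OF assms(1,3,4) that] .
  then show ?thesis
    using hom_equivalent_dipath[OF assms(2)] that by blast
qed

end

theorem mainTheorem8:
  fixes V :: "'a set" and E :: "('a \<times> 'a) set"
  assumes "finite V" and "digraph V E"
    and "Pol_satisfies V E (\<lambda>_. 3) Sigma_M"
    and "\<And>p::nat. prime p \<Longrightarrow> Pol_satisfies V E (\<lambda>_. p) (Sigma_cyclic p)"
  shows "\<forall>(ar :: 's \<Rightarrow> nat) (\<Sigma> :: 's minor_eq set).
           minor_condition ar \<Sigma> \<longrightarrow> Pol_satisfies P2_V P2_E ar \<Sigma> \<longrightarrow> Pol_satisfies V E ar \<Sigma>"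
proof (intro allI impI)
  fix ar :: "'s \<Rightarrow> nat" and \<Sigma> :: "'s minor_eq set"
  assume minor_cond: "minor_condition ar \<Sigma>" and P2: "Pol_satisfies P2_V P2_E ar \<Sigma>"
  obtain m where "quasi_majority V E m"
    using Sigma_M_imp_quasi_majority[OF assms(2,3)] by blast
  then interpret quasi_majority V E m .
  consider "V = {}" | c where "(c, c) \<in> E" | "V \<noteq> {}" "\<forall>c. (c, c) \<notin> E"
    by blast
  then show "Pol_satisfies V E ar \<Sigma>"
  proof cases
    case 1
    then show ?thesis using Pol_satisfies_empty_digraph[OF P2] by simp
  next
    case 2
    then have "c \<in> V" using edges_in by auto
    then show ?thesis by (rule Pol_satisfies_loop[OF 2])
  next
    case 3
    obtain K h g where "digraph_hom V E {..K} (dipath K) h" "digraph_hom {..K} (dipath K) V E g"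
      using loopless_hom_equivalent_dipath[OF assms(1) 3(1) Sigma_cyclic_imp_cyclic_pol[OF assms(4)] 3(2)]
      by blast
    then show ?thesis
      by (rule Pol_satisfies_hom_equiv[OF minor_cond Pol_satisfies_dipath[OF minor_cond P2]])
  qed
qed

end
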